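(* Let $(R,\mathfrak m,k)$ be a Noetherian local ring with $\mu(\mathfrak m^2)\le 2$. Then there exists $x\in\mathfrak m\setminus\mathfrak m^2$ such that $\mathfrak m^2=x\mathfrak m$. Moreover, if $\operatorname{lo}(R)\ge3$, then any such $x$ satisfies $x^2\notin\mathfrak m^3$.
   Context: $\mu(-)$ is the minimal number of generators. The Loewy length is $\operatorname{lo}(R)=\max\{i:\mathfrak m^i\neq0\}$ if $R$ is Artinian and $\infty$ otherwise. *)

theory Defs
  imports "HOL-Algebra.Ideal_Product" "HOL-Algebra.Ring_Divisibility" "HOL-Library.Extended_Nat"
begin

primrec ideal_pow :: "('a, 'b) ring_scheme \<Rightarrow> 'a set \<Rightarrow> nat \<Rightarrow> 'a set" where
  "ideal_pow R I 0 = carrier R"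
| "ideal_pow R I (Suc n) = ideal_prod R I (ideal_pow R I n)"

definition min_gens :: "('a, 'b) ring_scheme \<Rightarrow> 'a set \<Rightarrow> nat" where
  "min_gens R I = (LEAST n. \<exists>A. A \<subseteq> carrier R \<and> finite A \<and> card A = n \<and> I = Idl\<^bsub>R\<^esub> A)"

definition artinian :: "('a, 'b) ring_scheme \<Rightarrow> bool" where
  "artinian R \<longleftrightarrow> (\<forall>C :: nat \<Rightarrow> 'a set. (\<forall>n. ideal (C n) R \<and> C (Suc n) \<subseteq> C n)
       \<longrightarrow> (\<exists>N. \<forall>n\<ge>N. C n = C N))"

definition loewy_length :: "('a, 'b) ring_scheme \<Rightarrow> 'a set \<Rightarrow> enat" where
  "loewy_length R m = (if artinian R
      then enat (Max {i. ideal_pow R m i \<noteq> {\<zero>\<^bsub>R\<^esub>}}) else \<infinity>)"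

end

theory Submission
  imports Defs
begin

(* The quotient m^2/m^3 is a vector space of dimension at most 2 over the residue field, and
   by Nakayama's lemma it suffices to find w in m with w m + m^3 = m^2.  If m^2 = m^3, then
   m^2 = 0 and any nonzero element of m works.  Otherwise some product xy lies outside m^3; if it
   does not span m^2/m^3 alone, complete it to a basis xy, zt.  Either one of x, y, z, t already
   works, or else yz and xt lie in m^3, and then w = x + z works because xy = wy - yz and
   zt = wt - xt.
   For the second claim, m^2 = x m and x^2 in m^3 give m^3 = x^2 m, hence x^2 = x^2 u with
   u in m, so x^2 = 0 and m^3 = 0.  A Noetherian local ring with nilpotent maximal ideal has
   finite length, hence is Artinian, and its Loewy length is then at most 2. *)

no_notation Sum_Type.Plus (infixr \<open><+>\<close> 65)

section \<open>Sums, products and powers of ideals\<close>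

context ring
begin

lemmas ideal_zero_closed = additive_subgroup.zero_closed[OF ideal.axioms(1)]
lemmas ideal_add_closed = additive_subgroup.a_closed[OF ideal.axioms(1)]
lemmas ideal_a_inv_closed = additive_subgroup.a_inv_closed[OF ideal.axioms(1)]

lemma ideal_minus_closed: "ideal I R \<Longrightarrow> x \<in> I \<Longrightarrow> y \<in> I \<Longrightarrow> x \<ominus> y \<in> I"
  unfolding a_minus_def by (intro ideal_add_closed ideal_a_inv_closed)

lemma ideal_Un_subset_set_add:
  assumes "ideal I R" and "ideal J R"
  shows "I \<union> J \<subseteq> I <+> J"
  using genideal_self[of "I \<union> J"] union_genideal[OF assms] assms by (auto dest: ideal.Icarr)

lemma set_add_subset_ideal:
  assumes "ideal I R" "ideal J R" "ideal K R" and "I \<subseteq> K" "J \<subseteq> K"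
  shows "I <+> J \<subseteq> K"
  using genideal_minimal[OF assms(3), of "I \<union> J"] union_genideal[OF assms(1,2)] assms(4,5) by simp

lemma cgenideal_set_add_memI:
  assumes "c \<in> carrier R" and "k \<in> K"
  shows "c \<otimes> p \<oplus> k \<in> PIdl p <+> K"
  using assms unfolding set_add_def' cgenideal_def by blast

lemma ideal_prod_minimal:
  assumes "ideal K R" and "\<And>i j. i \<in> I \<Longrightarrow> j \<in> J \<Longrightarrow> i \<otimes> j \<in> K"
  shows "I \<cdot> J \<subseteq> K"
proof
  fix s assume "s \<in> I \<cdot> J"
  then show "s \<in> K"
    by induction (use assms in \<open>auto intro: ideal_add_closed\<close>)
qed

lemma ideal_pow_ideal: "ideal I R \<Longrightarrow> ideal (ideal_pow R I n) R"
  by (induction n) (simp_all add: oneideal ideal_prod_is_ideal)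

lemma ideal_pow_antimono:
  assumes "ideal I R" and "k \<le> n"
  shows "ideal_pow R I n \<subseteq> ideal_pow R I k"
  using assms(2)
proof (induction n rule: dec_induct)
  case (step n)
  then show ?case
    using ideal_prod_inter[OF assms(1) ideal_pow_ideal[OF assms(1)]] by fastforce
qed simp

lemma ideal_pow_two: "ideal I R \<Longrightarrow> ideal_pow R I 2 = I \<cdot> I"
  by (simp add: numeral_2_eq_2 ideal_prod_one)

lemma ideal_pow_three: "ideal_pow R I 3 = I \<cdot> ideal_pow R I 2"
  by (simp add: numeral_3_eq_3 numeral_2_eq_2)

end

section \<open>Ideals generated by two elements\<close>

context cring
begin

lemma genideal_insert:
  assumes "a \<in> carrier R" and "A \<subseteq> carrier R"
  shows "Idl (insert a A) = PIdl a <+> Idl A"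
proof -
  have ideals: "ideal (PIdl a) R" "ideal (Idl A) R" "ideal (Idl (insert a A)) R"
    using assms by (simp_all add: cgenideal_ideal genideal_ideal)
  have "insert a A \<subseteq> PIdl a \<union> Idl A"
    using assms cgenideal_self genideal_self by blast
  also have "\<dots> \<subseteq> Idl (PIdl a \<union> Idl A)"
    using ideals by (intro genideal_self) (auto dest: ideal.Icarr)
  finally have "Idl (insert a A) \<subseteq> Idl (PIdl a \<union> Idl A)"
    using ideals by (intro genideal_minimal genideal_ideal) (auto dest: ideal.Icarr)
  moreover have "Idl (PIdl a \<union> Idl A) \<subseteq> Idl (insert a A)"
    using assms by (intro genideal_minimal ideals(3) Un_least cgenideal_minimal subset_Idl_subset)
      (auto intro: genideal_self[THEN subsetD])
  ultimately show ?thesis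
    using union_genideal[OF ideals(1,2)] by blast
qed

lemma genideal_pair:
  assumes "a \<in> carrier R" and "b \<in> carrier R"
  shows "Idl {a, b} = PIdl a <+> PIdl b"
  using assms genideal_insert[of a "{b}"] cgenideal_eq_genideal[of b] by simp

lemma genideal_pairE:
  assumes "x \<in> Idl {a, b}" and "a \<in> carrier R" and "b \<in> carrier R"
  obtains c d where "c \<in> carrier R" "d \<in> carrier R" "x = c \<otimes> a \<oplus> d \<otimes> b"
  using assms unfolding genideal_pair[OF assms(2,3)] set_add_def' cgenideal_def by blast

lemma cgenideal_prod_memE:
  assumes "x \<in> (PIdl w) \<cdot> I" and "ideal I R" and "w \<in> carrier R"
  obtains r where "r \<in> I" "x = w \<otimes> r"
proof -
  from assms(1) have "\<exists>r\<in>I. x = w \<otimes> r"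
  proof induction
    case (prod i j)
    then obtain c where "c \<in> carrier R" "i = c \<otimes> w"
      unfolding cgenideal_def by blast
    with prod(2) show ?case
      using assms(2,3) by (intro bexI[of _ "c \<otimes> j"]) (auto simp: ideal.I_l_closed ideal.Icarr m_lcomm m_assoc)
  next
    case (sum s1 s2)
    then obtain r1 r2 where "r1 \<in> I" "r2 \<in> I" "s1 = w \<otimes> r1" "s2 = w \<otimes> r2"
      by blast
    then show ?case
      using assms(2,3) by (intro bexI[of _ "r1 \<oplus> r2"]) (simp_all add: r_distr ideal.Icarr ideal_add_closed)
  qed
  then show thesis
    using that by blast
qed

lemma ideal_prod_genideal_pairE:
  assumes "x \<in> I \<cdot> (Idl {a, b})" and "ideal I R" and "a \<in> carrier R" and "b \<in> carrier R"
  obtains r s where "r \<in> I" "s \<in> I" "x = a \<otimes> r \<oplus> b \<otimes> s"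
proof -
  have "I \<cdot> (Idl {a, b}) = (PIdl a) \<cdot> I <+> (PIdl b) \<cdot> I"
    using assms(2-4) by (simp add: genideal_pair ideal_prod_distr ideal_prod_commute cgenideal_ideal)
  with assms that show thesis
    unfolding set_add_def' by (auto elim!: cgenideal_prod_memE)
qed

lemma pair_cramer:
  assumes "a \<in> carrier R" "b \<in> carrier R"
    and "\<alpha> \<in> carrier R" "\<beta> \<in> carrier R" "\<gamma> \<in> carrier R" "\<delta> \<in> carrier R"
  shows "(\<alpha> \<otimes> \<delta> \<ominus> \<beta> \<otimes> \<gamma>) \<otimes> a = \<delta> \<otimes> (\<alpha> \<otimes> a \<oplus> \<beta> \<otimes> b) \<ominus> \<beta> \<otimes> (\<gamma> \<otimes> a \<oplus> \<delta> \<otimes> b)"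
    and "(\<alpha> \<otimes> \<delta> \<ominus> \<beta> \<otimes> \<gamma>) \<otimes> b = \<alpha> \<otimes> (\<gamma> \<otimes> a \<oplus> \<delta> \<otimes> b) \<ominus> \<gamma> \<otimes> (\<alpha> \<otimes> a \<oplus> \<beta> \<otimes> b)"
  using assms by algebra+

end

section \<open>Descending chains of ideals\<close>

definition dcc_between :: "('a, 'b) ring_scheme \<Rightarrow> 'a set \<Rightarrow> 'a set \<Rightarrow> bool"
  where "dcc_between R B E \<longleftrightarrow> (\<forall>C :: nat \<Rightarrow> 'a set.
    (\<forall>n. ideal (C n) R \<and> C (Suc n) \<subseteq> C n \<and> B \<subseteq> C n \<and> C n \<subseteq> E) \<longrightarrow> (\<exists>N. \<forall>n\<ge>N. C n = C N))"

context ring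
begin

lemma artinian_if_dcc_between: "dcc_between R {\<zero>} (carrier R) \<Longrightarrow> artinian R"
  unfolding artinian_def dcc_between_def
  by (metis ideal_zero_closed empty_subsetI ideal.Icarr insert_subset subsetI)

lemma dcc_between_refl: "dcc_between R B B"
  unfolding dcc_between_def by (metis order_antisym)

lemma dcc_between_if_no_intermediate:
  assumes "\<And>D. ideal D R \<Longrightarrow> B \<subseteq> D \<Longrightarrow> D \<subseteq> E \<Longrightarrow> D = B \<or> D = E"
  shows "dcc_between R B E"
  unfolding dcc_between_def
proof (intro allI impI)
  fix C :: "nat \<Rightarrow> 'a set"
  assume C: "\<forall>n. ideal (C n) R \<and> C (Suc n) \<subseteq> C n \<and> B \<subseteq> C n \<and> C n \<subseteq> E"
  then have "decseq C"
    by (simp add: decseq_SucI)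
  show "\<exists>N. \<forall>n\<ge>N. C n = C N"
  proof (cases "\<exists>N. C N = B")
    case True
    then obtain N where "C N = B" ..
    then show ?thesis
      using C \<open>decseq C\<close> by (metis decseqD order_antisym)
  next
    case False
    then show ?thesis
      using C assms by metis
  qed
qed

text \<open>A chain between \<open>B\<close> and \<open>E\<close> is recovered from its traces \<open>C n \<inter> B'\<close> and \<open>C n <+> B'\<close>
  (modular law).\<close>

lemma dcc_between_trans:
  assumes ideals: "ideal B' R" "ideal E R" and "B \<subseteq> B'" "B' \<subseteq> E"
    and lower: "dcc_between R B B'" and upper: "dcc_between R B' E"
  shows "dcc_between R B E"
  unfolding dcc_between_def
proof (intro allI impI)
  fix C :: "nat \<Rightarrow> 'a set"
  assume C: "\<forall>n. ideal (C n) R \<and> C (Suc n) \<subseteq> C n \<and> B \<subseteq> C n \<and> C n \<subseteq> E"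
  then have "decseq C"
    by (simp add: decseq_SucI)
  have "\<forall>n. ideal (C n \<inter> B') R \<and> C (Suc n) \<inter> B' \<subseteq> C n \<inter> B' \<and> B \<subseteq> C n \<inter> B' \<and> C n \<inter> B' \<subseteq> B'"
    using C ideals(1) assms(3) i_intersect by blast
  then obtain N1 where N1: "\<And>n. n \<ge> N1 \<Longrightarrow> C n \<inter> B' = C N1 \<inter> B'"
    using lower[unfolded dcc_between_def, THEN spec, of "\<lambda>n. C n \<inter> B'"] by auto
  have "ideal (C n <+> B') R \<and> C (Suc n) <+> B' \<subseteq> C n <+> B' \<and> B' \<subseteq> C n <+> B' \<and> C n <+> B' \<subseteq> E"
    for n
  proof (intro conjI)
    have Cn: "ideal (C n) R" "C (Suc n) \<subseteq> C n" "C n \<subseteq> E"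
      using C by blast+
    show "ideal (C n <+> B') R"
      by (rule add_ideals[OF Cn(1) ideals(1)])
    show "C (Suc n) <+> B' \<subseteq> C n <+> B'"
      using Cn(2) unfolding set_add_def' by blast
    show "B' \<subseteq> C n <+> B'"
      using ideal_Un_subset_set_add[OF Cn(1) ideals(1)] by blast
    show "C n <+> B' \<subseteq> E"
      by (rule set_add_subset_ideal[OF Cn(1) ideals(1,2) Cn(3) assms(4)])
  qed
  then obtain N2 where N2: "\<And>n. n \<ge> N2 \<Longrightarrow> C n <+> B' = C N2 <+> B'"
    using upper[unfolded dcc_between_def, THEN spec, of "\<lambda>n. C n <+> B'"] by auto
  have "C n = C (max N1 N2)" if "n \<ge> max N1 N2" for n
  proof
    show "C n \<subseteq> C (max N1 N2)"
      using \<open>decseq C\<close> that by (simp add: decseqD)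
    show "C (max N1 N2) \<subseteq> C n"
    proof
      fix z assume z: "z \<in> C (max N1 N2)"
      then have "z \<in> C n <+> B'"
        using N2[of n] N2[of "max N1 N2"] that ideal_Un_subset_set_add[OF _ ideals(1)] C by auto
      then obtain c b where cb: "c \<in> C n" "b \<in> B'" "z = c \<oplus> b"
        unfolding set_add_def' by blast
      have Cn: "ideal (C n) R" and Cmax: "ideal (C (max N1 N2)) R"
        using C by blast+
      have carr: "c \<in> carrier R" "b \<in> carrier R"
        using ideal.Icarr[OF Cn cb(1)] ideal.Icarr[OF ideals(1) cb(2)] .
      have "c \<in> C (max N1 N2)"
        using cb(1) decseqD[OF \<open>decseq C\<close> that] by blast
      moreover have "b = z \<ominus> c"
        using cb(3) carr by algebra
      ultimately have "b \<in> C (max N1 N2)"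
        using z ideal_minus_closed[OF Cmax] by simp
      then have "b \<in> C n"
        using N1[of n] N1[of "max N1 N2"] that cb(2) by auto
      then show "z \<in> C n"
        using cb ideal_add_closed[OF Cn] by simp
    qed
  qed
  then show "\<exists>N. \<forall>n\<ge>N. C n = C N"
    by blast
qed

end

section \<open>Local rings and Nakayama's lemma\<close>

locale local_ring = cring +
  fixes m :: "'a set"
  assumes maximal: "maximalideal m R"
    and maximal_unique: "\<And>J. maximalideal J R \<Longrightarrow> J = m"
begin

lemma max_ideal: "ideal m R"
  using maximal by (rule maximalideal.axioms(1))

lemma max_carrier: "x \<in> m \<Longrightarrow> x \<in> carrier R"
  using ideal.Icarr[OF max_ideal] .

lemma one_notin_max: "\<one> \<notin> m"
  using ideal.one_imp_carrier[OF max_ideal] maximalideal.I_notcarr[OF maximal] by blast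

lemma notin_max_Units:
  assumes x: "x \<in> carrier R" and "x \<notin> m"
  shows "x \<in> Units R"
proof (rule ccontr)
  assume "x \<notin> Units R"
  then have one: "\<one> \<notin> PIdl x"
    using x unfolding cgenideal_def Units_def by (auto simp: m_comm)
  define \<A> where "\<A> = {J. ideal J R \<and> PIdl x \<subseteq> J \<and> \<one> \<notin> J}"
  have "\<exists>M\<in>\<A>. \<forall>J\<in>\<A>. M \<subseteq> J \<longrightarrow> J = M"
  proof (rule subset_Zorn_nonempty)
    show "\<A> \<noteq> {}"
      using one cgenideal_ideal[OF x] unfolding \<A>_def by blast
  next
    fix \<C> assume "\<C> \<noteq> {}" and chain: "subset.chain \<A> \<C>"
    then have "ideal (\<Union>\<C>) R"
      using chain_Union_is_ideal[of \<C>] chain unfolding \<A>_def pred_on.chain_def by auto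
    with \<open>\<C> \<noteq> {}\<close> chain show "\<Union>\<C> \<in> \<A>"
      unfolding \<A>_def pred_on.chain_def by blast
  qed
  then obtain M where M: "M \<in> \<A>" and M_max: "\<And>J. J \<in> \<A> \<Longrightarrow> M \<subseteq> J \<Longrightarrow> J = M"
    by blast
  have "maximalideal M R"
  proof (rule maximalidealI)
    show "ideal M R" and "carrier R \<noteq> M"
      using M unfolding \<A>_def by auto
    fix J assume "ideal J R" "M \<subseteq> J" "J \<subseteq> carrier R"
    then show "J = M \<or> J = carrier R"
      using M M_max[of J] ideal.one_imp_carrier[of J R] unfolding \<A>_def by blast
  qed
  then have "x \<in> m"
    using maximal_unique M cgenideal_self[OF x] unfolding \<A>_def by blast
  with \<open>x \<notin> m\<close> show False ..
qed

lemma ideal_cancel: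
  assumes "ideal K R" and "c \<in> carrier R" "c \<notin> m" and "v \<in> carrier R" and "c \<otimes> v \<in> K"
  shows "v \<in> K"
proof -
  have "c \<in> Units R"
    using notin_max_Units assms(2,3) by blast
  then have "inv c \<in> carrier R" and "inv c \<otimes> (c \<otimes> v) = v"
    using assms(2,4) by (simp_all add: m_assoc[symmetric])
  then show ?thesis
    using ideal.I_l_closed[OF assms(1,5), of "inv c"] by simp
qed

lemma coeff_in_max_if_notin:
  assumes "ideal K R" and "c \<in> carrier R" "p \<in> carrier R" and "c \<otimes> p \<in> K" "p \<notin> K"
  shows "c \<in> m"
  using ideal_cancel[OF assms(1,2) _ assms(3,4)] assms(5) by blast

lemma add_max_eq_one_imp_notin:
  assumes "x \<oplus> u = \<one>" and "u \<in> m" and "x \<in> carrier R"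
  shows "x \<notin> m"
  using assms one_notin_max ideal_add_closed[OF max_ideal] by metis

lemma pair_in_ideal_if_det_notin:
  assumes "ideal J R" and carr: "a \<in> carrier R" "b \<in> carrier R"
    "\<alpha> \<in> carrier R" "\<beta> \<in> carrier R" "\<gamma> \<in> carrier R" "\<delta> \<in> carrier R"
    and "\<alpha> \<otimes> a \<oplus> \<beta> \<otimes> b \<in> J" "\<gamma> \<otimes> a \<oplus> \<delta> \<otimes> b \<in> J"
    and "\<alpha> \<otimes> \<delta> \<ominus> \<beta> \<otimes> \<gamma> \<notin> m"
  shows "a \<in> J" and "b \<in> J"
proof -
  have "(\<alpha> \<otimes> \<delta> \<ominus> \<beta> \<otimes> \<gamma>) \<otimes> a \<in> J" "(\<alpha> \<otimes> \<delta> \<ominus> \<beta> \<otimes> \<gamma>) \<otimes> b \<in> J"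
    unfolding pair_cramer[OF carr] using assms(1,8,9) carr
    by (simp_all add: ideal.I_l_closed ideal_minus_closed)
  then show "a \<in> J" and "b \<in> J"
    using ideal_cancel[OF assms(1) _ assms(10)] carr by simp_all
qed

lemma nakayama_pair:
  assumes carr: "a \<in> carrier R" "b \<in> carrier R" and J: "ideal J R"
    and sub: "Idl {a, b} \<subseteq> J <+> m \<cdot> (Idl {a, b})"
  shows "Idl {a, b} \<subseteq> J"
proof -
  have "a \<in> J <+> m \<cdot> (Idl {a, b})" "b \<in> J <+> m \<cdot> (Idl {a, b})"
    using sub genideal_self[of "{a, b}"] carr by auto
  then obtain j1 q1 j2 q2 where j: "j1 \<in> J" "j2 \<in> J"
    and q: "q1 \<in> m \<cdot> (Idl {a, b})" "q2 \<in> m \<cdot> (Idl {a, b})"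
    and ab: "a = j1 \<oplus> q1" "b = j2 \<oplus> q2"
    unfolding set_add_def' by blast
  obtain r s where rs: "r \<in> m" "s \<in> m" "q1 = a \<otimes> r \<oplus> b \<otimes> s"
    using q(1) max_ideal carr by (rule ideal_prod_genideal_pairE)
  obtain t u where tu: "t \<in> m" "u \<in> m" "q2 = a \<otimes> t \<oplus> b \<otimes> u"
    using q(2) max_ideal carr by (rule ideal_prod_genideal_pairE)
  have carr': "r \<in> carrier R" "s \<in> carrier R" "t \<in> carrier R" "u \<in> carrier R"
    "j1 \<in> carrier R" "j2 \<in> carrier R"
    using rs tu j max_carrier ideal.Icarr[OF J] by auto
  have "q1 \<in> carrier R" "q2 \<in> carrier R"
    using rs(3) tu(3) carr carr' by simp_all
  then have "a \<ominus> q1 = j1" "b \<ominus> q2 = j2"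
    using ab carr' by (simp_all add: a_minus_def a_assoc r_neg)
  moreover have "(\<one> \<ominus> r) \<otimes> a \<oplus> (\<ominus> s) \<otimes> b = a \<ominus> q1" "(\<ominus> t) \<otimes> a \<oplus> (\<one> \<ominus> u) \<otimes> b = b \<ominus> q2"
    unfolding rs(3) tu(3) using carr carr' by algebra+
  ultimately have eqs: "(\<one> \<ominus> r) \<otimes> a \<oplus> (\<ominus> s) \<otimes> b = j1" "(\<ominus> t) \<otimes> a \<oplus> (\<one> \<ominus> u) \<otimes> b = j2"
    by simp_all
  have "(\<one> \<ominus> r) \<otimes> (\<one> \<ominus> u) \<ominus> (\<ominus> s) \<otimes> (\<ominus> t) \<oplus> (r \<oplus> u \<ominus> r \<otimes> u \<oplus> s \<otimes> t) = \<one>"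
    using carr' by algebra
  moreover have "r \<oplus> u \<ominus> r \<otimes> u \<oplus> s \<otimes> t \<in> m"
    using rs tu carr' max_ideal by (simp add: ideal.I_l_closed ideal_add_closed ideal_minus_closed)
  ultimately have det: "(\<one> \<ominus> r) \<otimes> (\<one> \<ominus> u) \<ominus> (\<ominus> s) \<otimes> (\<ominus> t) \<notin> m"
    by (rule add_max_eq_one_imp_notin) (use carr' in simp)
  have "a \<in> J" "b \<in> J"
    using pair_in_ideal_if_det_notin[OF J carr _ _ _ _ _ _ det] eqs j carr' by simp_all
  then show ?thesis
    using genideal_minimal[OF J] by simp
qed

lemma genideal_pair_subset_if_independent:
  assumes carr: "a \<in> carrier R" "b \<in> carrier R"
    and p: "p1 \<in> Idl {a, b}" "p2 \<in> Idl {a, b}"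
    and indep: "p1 \<notin> m \<cdot> (Idl {a, b})" "p2 \<notin> PIdl p1 <+> m \<cdot> (Idl {a, b})"
  shows "Idl {a, b} \<subseteq> Idl {p1, p2}"
proof -
  let ?mI = "m \<cdot> (Idl {a, b})"
  have I: "ideal (Idl {a, b}) R"
    using carr by (simp add: genideal_ideal)
  then have pc: "p1 \<in> carrier R" "p2 \<in> carrier R"
    using p by (simp_all add: ideal.Icarr)
  have ideals: "ideal ?mI R" "ideal (Idl {p1, p2}) R"
    using ideal_prod_is_ideal[OF max_ideal I] genideal_ideal[of "{p1, p2}"] pc by simp_all
  have gens: "a \<in> Idl {a, b}" "b \<in> Idl {a, b}"
    using carr genideal_self[of "{a, b}"] by auto
  obtain \<alpha> \<beta> where \<alpha>\<beta>: "\<alpha> \<in> carrier R" "\<beta> \<in> carrier R" "p1 = \<alpha> \<otimes> a \<oplus> \<beta> \<otimes> b"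
    using p(1) carr by (rule genideal_pairE)
  obtain \<gamma> \<delta> where \<gamma>\<delta>: "\<gamma> \<in> carrier R" "\<delta> \<in> carrier R" "p2 = \<gamma> \<otimes> a \<oplus> \<delta> \<otimes> b"
    using p(2) carr by (rule genideal_pairE)
  have coeff_in_max: "c \<in> m" if "c \<in> carrier R" "d \<in> carrier R" "c \<otimes> p2 \<ominus> d \<otimes> p1 \<in> ?mI" for c d
  proof (rule coeff_in_max_if_notin[OF add_ideals[OF cgenideal_ideal[OF pc(1)] ideals(1)] that(1) pc(2) _ indep(2)])
    have "d \<otimes> p1 \<oplus> (c \<otimes> p2 \<ominus> d \<otimes> p1) = c \<otimes> p2"
      using that(1,2) pc by algebra
    then show "c \<otimes> p2 \<in> PIdl p1 <+> ?mI"
      using cgenideal_set_add_memI[OF that(2,3), of p1] by simp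
  qed
  have det: "\<alpha> \<otimes> \<delta> \<ominus> \<beta> \<otimes> \<gamma> \<notin> m"
  proof
    assume det: "\<alpha> \<otimes> \<delta> \<ominus> \<beta> \<otimes> \<gamma> \<in> m"
    have "\<delta> \<otimes> p1 \<ominus> \<beta> \<otimes> p2 \<in> ?mI" "\<alpha> \<otimes> p2 \<ominus> \<gamma> \<otimes> p1 \<in> ?mI"
      using ideal_prod.prod[where R=R, OF det gens(1)] ideal_prod.prod[where R=R, OF det gens(2)]
      by (simp_all only: pair_cramer[OF carr \<alpha>\<beta>(1,2) \<gamma>\<delta>(1,2)] \<alpha>\<beta>(3)[symmetric] \<gamma>\<delta>(3)[symmetric])
    moreover have "\<beta> \<otimes> p2 \<ominus> \<delta> \<otimes> p1 = \<ominus> (\<delta> \<otimes> p1 \<ominus> \<beta> \<otimes> p2)"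
      using pc \<alpha>\<beta> \<gamma>\<delta> by algebra
    ultimately have "\<beta> \<otimes> p2 \<ominus> \<delta> \<otimes> p1 \<in> ?mI" "\<alpha> \<otimes> p2 \<ominus> \<gamma> \<otimes> p1 \<in> ?mI"
      using ideal_a_inv_closed[OF ideals(1)] by metis+
    then have "\<alpha> \<in> m" "\<beta> \<in> m"
      using coeff_in_max \<alpha>\<beta>(1,2) \<gamma>\<delta>(1,2) by blast+
    then have "p1 \<in> ?mI"
      unfolding \<alpha>\<beta>(3) using ideal_prod.prod[where R=R] gens
      by (intro ideal_add_closed[OF ideals(1)]) simp_all
    with indep(1) show False ..
  qed
  have "p1 \<in> Idl {p1, p2}" "p2 \<in> Idl {p1, p2}"
    using genideal_self[of "{p1, p2}"] pc by auto
  then have "a \<in> Idl {p1, p2}" "b \<in> Idl {p1, p2}"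
    using pair_in_ideal_if_det_notin[OF ideals(2) carr \<alpha>\<beta>(1,2) \<gamma>\<delta>(1,2) _ _ det] \<alpha>\<beta>(3) \<gamma>\<delta>(3)
    by simp_all
  then show ?thesis
    using genideal_minimal[OF ideals(2)] by simp
qed

end

section \<open>The square of the maximal ideal\<close>

context local_ring
begin

lemmas max_pow_ideal = ideal_pow_ideal[OF max_ideal]

lemma square_memI: "x \<in> m \<Longrightarrow> y \<in> m \<Longrightarrow> x \<otimes> y \<in> ideal_pow R m 2"
  by (simp add: ideal_pow_two[OF max_ideal] ideal_prod.prod)

lemma cube_memI: "r \<in> m \<Longrightarrow> v \<in> ideal_pow R m 2 \<Longrightarrow> r \<otimes> v \<in> ideal_pow R m 3"
  by (simp add: ideal_pow_three ideal_prod.prod)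

lemma ex_products_notin:
  assumes "ideal K R" and "\<not> ideal_pow R m 2 \<subseteq> K"
  obtains x y where "x \<in> m" "y \<in> m" "x \<otimes> y \<notin> K"
  using ideal_prod_minimal[OF assms(1)] assms(2) ideal_pow_two[OF max_ideal] by blast

text \<open>\<open>mult_mod_cube w\<close> is the preimage in \<open>R\<close> of the image of multiplication by \<open>w\<close>,
  as a map from \<open>m/m\<^sup>2\<close> to \<open>m\<^sup>2/m\<^sup>3\<close>.\<close>

definition mult_mod_cube :: "'a \<Rightarrow> 'a set"
  where "mult_mod_cube w = (PIdl w) \<cdot> m <+> ideal_pow R m 3"

lemma mult_mod_cube_ideal: "w \<in> carrier R \<Longrightarrow> ideal (mult_mod_cube w) R"
  unfolding mult_mod_cube_def
  by (intro add_ideals ideal_prod_is_ideal cgenideal_ideal max_ideal max_pow_ideal)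

lemma mult_mod_cube_memI:
  assumes "w \<in> carrier R" and "r \<in> m"
  shows "w \<otimes> r \<in> mult_mod_cube w"
  using ideal_Un_subset_set_add[OF ideal_prod_is_ideal[OF cgenideal_ideal[OF assms(1)] max_ideal] max_pow_ideal]
    ideal_prod.prod[OF cgenideal_self[OF assms(1)] assms(2)]
  unfolding mult_mod_cube_def by blast

lemma cube_subset_mult_mod_cube: "w \<in> carrier R \<Longrightarrow> ideal_pow R m 3 \<subseteq> mult_mod_cube w"
  using ideal_Un_subset_set_add[OF ideal_prod_is_ideal[OF cgenideal_ideal max_ideal] max_pow_ideal]
  unfolding mult_mod_cube_def by blast

lemma square_eq_if_subset_mult_mod_cube:
  assumes carr: "a \<in> carrier R" "b \<in> carrier R" and gens: "ideal_pow R m 2 = Idl {a, b}"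
    and "w \<in> m" and sub: "ideal_pow R m 2 \<subseteq> mult_mod_cube w"
  shows "ideal_pow R m 2 = (PIdl w) \<cdot> m"
proof
  have w: "w \<in> carrier R"
    using \<open>w \<in> m\<close> by (rule max_carrier)
  show "(PIdl w) \<cdot> m \<subseteq> ideal_pow R m 2"
    using \<open>w \<in> m\<close> square_memI by (auto elim: cgenideal_prod_memE[OF _ max_ideal w])
  show "ideal_pow R m 2 \<subseteq> (PIdl w) \<cdot> m"
    using nakayama_pair[OF carr ideal_prod_is_ideal[OF cgenideal_ideal[OF w] max_ideal]] sub gens
    unfolding mult_mod_cube_def ideal_pow_three by simp
qed

lemma product_in_cube_if_separated:
  assumes uv: "u \<in> m" "v \<in> m" and p: "p1 \<in> ideal_pow R m 2" "p2 \<in> ideal_pow R m 2"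
    and gens: "ideal_pow R m 2 \<subseteq> Idl {p1, p2}"
    and "p1 \<in> mult_mod_cube u" "p2 \<notin> mult_mod_cube u"
    and "p2 \<in> mult_mod_cube v" "p1 \<notin> mult_mod_cube v"
  shows "u \<otimes> v \<in> ideal_pow R m 3"
proof -
  have carr: "u \<in> carrier R" "v \<in> carrier R" "p1 \<in> carrier R" "p2 \<in> carrier R"
    using uv p max_carrier ideal.Icarr[OF max_pow_ideal] by auto
  have ideals: "ideal (mult_mod_cube u) R" "ideal (mult_mod_cube v) R"
    using carr mult_mod_cube_ideal by simp_all
  obtain c d where cd: "c \<in> carrier R" "d \<in> carrier R" "u \<otimes> v = c \<otimes> p1 \<oplus> d \<otimes> p2"
    using gens square_memI[OF uv] carr(3,4) by (blast elim: genideal_pairE)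
  have "d \<otimes> p2 = u \<otimes> v \<ominus> c \<otimes> p1"
    using cd carr by algebra
  also have "\<dots> \<in> mult_mod_cube u"
    using mult_mod_cube_memI[OF carr(1) uv(2)] assms(6) cd(1)
    by (simp add: ideal_minus_closed[OF ideals(1)] ideal.I_l_closed[OF ideals(1)])
  finally have "d \<in> m"
    using coeff_in_max_if_notin[OF ideals(1) cd(2) carr(4) _ assms(7)] by simp
  have "c \<otimes> p1 = v \<otimes> u \<ominus> d \<otimes> p2"
    using cd carr by algebra
  also have "\<dots> \<in> mult_mod_cube v"
    using mult_mod_cube_memI[OF carr(2) uv(1)] assms(8) cd(2)
    by (simp add: ideal_minus_closed[OF ideals(2)] ideal.I_l_closed[OF ideals(2)])
  finally have "c \<in> m"
    using coeff_in_max_if_notin[OF ideals(2) cd(1) carr(3) _ assms(9)] by simp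
  with \<open>d \<in> m\<close> show ?thesis
    unfolding cd(3) using cube_memI p by (intro ideal_add_closed[OF max_pow_ideal]) simp_all
qed

lemma ex_mult_mod_cube_superset_of_products:
  assumes xyzt: "x \<in> m" "y \<in> m" "z \<in> m" "t \<in> m"
    and gens: "ideal_pow R m 2 \<subseteq> Idl {x \<otimes> y, z \<otimes> t}"
  shows "\<exists>w\<in>m. ideal_pow R m 2 \<subseteq> mult_mod_cube w"
proof (rule ccontr)
  assume none: "\<not> ?thesis"
  have carr: "x \<in> carrier R" "y \<in> carrier R" "z \<in> carrier R" "t \<in> carrier R"
    using xyzt max_carrier by auto
  have p: "x \<otimes> y \<in> ideal_pow R m 2" "z \<otimes> t \<in> ideal_pow R m 2"
    using xyzt square_memI by auto
  have not_both: "\<not> (x \<otimes> y \<in> mult_mod_cube w \<and> z \<otimes> t \<in> mult_mod_cube w)" if "w \<in> m" for w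
  proof
    assume "x \<otimes> y \<in> mult_mod_cube w \<and> z \<otimes> t \<in> mult_mod_cube w"
    then have "Idl {x \<otimes> y, z \<otimes> t} \<subseteq> mult_mod_cube w"
      using genideal_minimal[OF mult_mod_cube_ideal[OF max_carrier[OF that]]] by simp
    with gens none that show False by blast
  qed
  have own: "x \<otimes> y \<in> mult_mod_cube x" "x \<otimes> y \<in> mult_mod_cube y"
    "z \<otimes> t \<in> mult_mod_cube z" "z \<otimes> t \<in> mult_mod_cube t"
    using mult_mod_cube_memI carr xyzt m_comm[of x y] m_comm[of z t] by metis+
  then have other: "z \<otimes> t \<notin> mult_mod_cube x" "z \<otimes> t \<notin> mult_mod_cube y"
    "x \<otimes> y \<notin> mult_mod_cube z" "x \<otimes> y \<notin> mult_mod_cube t"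
    using not_both xyzt by blast+
  have "y \<otimes> z \<in> ideal_pow R m 3" "x \<otimes> t \<in> ideal_pow R m 3"
    using product_in_cube_if_separated[OF _ _ p gens] xyzt own other by blast+
  moreover have "x \<otimes> y = (x \<oplus> z) \<otimes> y \<ominus> y \<otimes> z" "z \<otimes> t = (x \<oplus> z) \<otimes> t \<ominus> x \<otimes> t"
    using carr by algebra+
  moreover have "x \<oplus> z \<in> m"
    using xyzt by (simp add: ideal_add_closed[OF max_ideal])
  ultimately have "x \<otimes> y \<in> mult_mod_cube (x \<oplus> z) \<and> z \<otimes> t \<in> mult_mod_cube (x \<oplus> z)"
    using mult_mod_cube_memI[of "x \<oplus> z"] cube_subset_mult_mod_cube[of "x \<oplus> z"]
      ideal_minus_closed[OF mult_mod_cube_ideal[of "x \<oplus> z"]] xyzt carr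
    by auto
  with not_both \<open>x \<oplus> z \<in> m\<close> show False by blast
qed

lemma ex_mult_mod_cube_superset:
  assumes carr: "a \<in> carrier R" "b \<in> carrier R" and gens: "ideal_pow R m 2 = Idl {a, b}"
    and "\<not> ideal_pow R m 2 \<subseteq> ideal_pow R m 3"
  shows "\<exists>w\<in>m. ideal_pow R m 2 \<subseteq> mult_mod_cube w"
proof -
  obtain x y where xy: "x \<in> m" "y \<in> m" "x \<otimes> y \<notin> ideal_pow R m 3"
    using ex_products_notin[OF max_pow_ideal assms(4)] by blast
  have xyc: "x \<in> carrier R" "x \<otimes> y \<in> carrier R"
    using xy max_carrier by simp_all
  show ?thesis
  proof (cases "ideal_pow R m 2 \<subseteq> PIdl (x \<otimes> y) <+> ideal_pow R m 3")
    case True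
    have "PIdl (x \<otimes> y) \<subseteq> mult_mod_cube x"
      using cgenideal_minimal[OF mult_mod_cube_ideal mult_mod_cube_memI] xyc xy by blast
    then have "PIdl (x \<otimes> y) <+> ideal_pow R m 3 \<subseteq> mult_mod_cube x"
      using xyc cube_subset_mult_mod_cube[OF xyc(1)]
      by (intro set_add_subset_ideal cgenideal_ideal max_pow_ideal mult_mod_cube_ideal)
    with True xy(1) show ?thesis by blast
  next
    case False
    then obtain z t where zt: "z \<in> m" "t \<in> m" "z \<otimes> t \<notin> PIdl (x \<otimes> y) <+> ideal_pow R m 3"
      using ex_products_notin[OF add_ideals[OF cgenideal_ideal[OF xyc(2)] max_pow_ideal]] by blast
    have "ideal_pow R m 2 \<subseteq> Idl {x \<otimes> y, z \<otimes> t}"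
      using genideal_pair_subset_if_independent[OF carr, of "x \<otimes> y" "z \<otimes> t"] xy zt square_memI
      unfolding gens[symmetric] ideal_pow_three[symmetric] by blast
    then show ?thesis
      by (rule ex_mult_mod_cube_superset_of_products[OF xy(1,2) zt(1,2)])
  qed
qed

lemma ex_square_eq_cgenideal_prod:
  assumes carr: "a \<in> carrier R" "b \<in> carrier R" and gens: "ideal_pow R m 2 = Idl {a, b}"
    and "m \<noteq> {\<zero>}"
  shows "\<exists>x \<in> m - ideal_pow R m 2. ideal_pow R m 2 = (PIdl x) \<cdot> m"
proof (cases "ideal_pow R m 2 \<subseteq> ideal_pow R m 3")
  case True
  then have "ideal_pow R m 2 \<subseteq> {\<zero>} <+> m \<cdot> (Idl {a, b})"
    using ideal_Un_subset_set_add[OF zeroideal max_pow_ideal]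
    unfolding gens[symmetric] ideal_pow_three[symmetric] by blast
  then have "ideal_pow R m 2 \<subseteq> {\<zero>}"
    using nakayama_pair[OF carr zeroideal] unfolding gens by blast
  moreover obtain w where w: "w \<in> m" "w \<noteq> \<zero>"
    using assms(4) ideal_zero_closed[OF max_ideal] by blast
  moreover have "(PIdl w) \<cdot> m \<subseteq> ideal_pow R m 2"
    using w(1) square_memI by (auto elim: cgenideal_prod_memE[OF _ max_ideal max_carrier])
  moreover have "\<zero> \<in> (PIdl w) \<cdot> m"
    using max_carrier[OF w(1)] by (intro ideal_zero_closed ideal_prod_is_ideal cgenideal_ideal max_ideal)
  ultimately show ?thesis
    by blast
next
  case False
  then obtain w where w: "w \<in> m" "ideal_pow R m 2 \<subseteq> mult_mod_cube w"
    using ex_mult_mod_cube_superset[OF carr gens] by blast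
  then have eq: "ideal_pow R m 2 = (PIdl w) \<cdot> m"
    by (rule square_eq_if_subset_mult_mod_cube[OF carr gens])
  have "w \<notin> ideal_pow R m 2"
  proof
    assume "w \<in> ideal_pow R m 2"
    then have "(PIdl w) \<cdot> m \<subseteq> ideal_pow R m 3"
      using cube_memI max_carrier w(1) by (auto elim!: cgenideal_prod_memE[OF _ max_ideal] simp: m_comm)
    with False eq show False by simp
  qed
  with w(1) eq show ?thesis by blast
qed

lemma cube_eq_zero_if_square_in_cube:
  assumes x: "x \<in> m" and eq: "ideal_pow R m 2 = (PIdl x) \<cdot> m"
    and xx: "x \<otimes> x \<in> ideal_pow R m 3"
  shows "ideal_pow R m 3 = {\<zero>}"
proof -
  have xc: "x \<in> carrier R" "x \<otimes> x \<in> carrier R"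
    using x max_carrier by simp_all
  have cube_sub: "ideal_pow R m 3 \<subseteq> (PIdl (x \<otimes> x)) \<cdot> m"
    unfolding ideal_pow_three
  proof (rule ideal_prod_minimal[OF ideal_prod_is_ideal[OF cgenideal_ideal[OF xc(2)] max_ideal]])
    fix i j assume "i \<in> m" "j \<in> ideal_pow R m 2"
    then obtain r where r: "r \<in> m" "j = x \<otimes> r"
      using eq cgenideal_prod_memE[OF _ max_ideal xc(1)] by auto
    obtain r' where r': "r' \<in> m" "i \<otimes> r = x \<otimes> r'"
      using square_memI[OF \<open>i \<in> m\<close> r(1)] eq cgenideal_prod_memE[OF _ max_ideal xc(1)] by auto
    have carr: "i \<in> carrier R" "r \<in> carrier R" "r' \<in> carrier R"
      using \<open>i \<in> m\<close> r(1) r'(1) max_carrier by auto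
    have "i \<otimes> j = x \<otimes> (i \<otimes> r)"
      using r(2) carr xc by (simp add: m_lcomm)
    also have "\<dots> = (x \<otimes> x) \<otimes> r'"
      using r'(2) carr xc by (simp add: m_assoc)
    finally show "i \<otimes> j \<in> (PIdl (x \<otimes> x)) \<cdot> m"
      using ideal_prod.prod[OF cgenideal_self[OF xc(2)] r'(1)] by simp
  qed
  then obtain u where u: "u \<in> m" "x \<otimes> x = (x \<otimes> x) \<otimes> u"
    using xx cgenideal_prod_memE[OF _ max_ideal xc(2)] by blast
  have uc: "u \<in> carrier R"
    using u(1) by (rule max_carrier)
  have "(\<one> \<ominus> u) \<otimes> (x \<otimes> x) = x \<otimes> x \<ominus> (x \<otimes> x) \<otimes> u"
    using uc xc by algebra
  also have "\<dots> = \<zero>"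
    using u(2)[symmetric] xc by (simp add: a_minus_def r_neg)
  finally have "(\<one> \<ominus> u) \<otimes> (x \<otimes> x) = \<zero>" .
  moreover have "\<one> \<ominus> u \<notin> m"
    using uc u(1) by (intro add_max_eq_one_imp_notin[of _ u]) (simp_all add: a_minus_def a_assoc l_neg)
  ultimately have "x \<otimes> x = \<zero>"
    using ideal_cancel[OF zeroideal, of "\<one> \<ominus> u" "x \<otimes> x"] uc xc by simp
  then have "(PIdl (x \<otimes> x)) \<cdot> m \<subseteq> {\<zero>}"
    using max_carrier by (auto elim!: cgenideal_prod_memE[OF _ max_ideal zero_closed])
  with cube_sub show ?thesis
    using ideal_zero_closed[OF max_pow_ideal] by blast
qed

end

section \<open>Nilpotent maximal ideals and the Loewy length\<close>

context local_ring
begin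

lemma ideal_between_cgenideal:
  assumes B: "ideal B R" and g: "g \<in> carrier R" and mg: "\<And>r. r \<in> m \<Longrightarrow> r \<otimes> g \<in> B"
    and D: "ideal D R" "B \<subseteq> D" "D \<subseteq> B <+> PIdl g"
  shows "D = B \<or> D = B <+> PIdl g"
proof (cases "D \<subseteq> B")
  case True
  with D(2) show ?thesis by blast
next
  case False
  then obtain d where d: "d \<in> D" "d \<notin> B"
    by blast
  then obtain b c where bc: "b \<in> B" "c \<in> carrier R" "d = b \<oplus> c \<otimes> g"
    using D(3) unfolding set_add_def' cgenideal_def by blast
  have "c \<notin> m"
  proof
    assume "c \<in> m"
    then have "d \<in> B"
      using bc mg ideal_add_closed[OF B] by simp
    with d(2) show False ..
  qed
  moreover have "c \<otimes> g = d \<ominus> b"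
    using bc g ideal.Icarr[OF B bc(1)] by algebra
  then have "c \<otimes> g \<in> D"
    using d(1) bc(1) D(2) ideal_minus_closed[OF D(1)] by auto
  ultimately have "g \<in> D"
    using ideal_cancel[OF D(1) bc(2) _ g] by blast
  then have "B <+> PIdl g \<subseteq> D"
    using set_add_subset_ideal[OF B cgenideal_ideal[OF g] D(1) D(2)] cgenideal_minimal[OF D(1)] by blast
  with D(3) show ?thesis by blast
qed

lemma dcc_between_genideal:
  assumes B: "ideal B R" and "finite A" "A \<subseteq> carrier R"
    and "\<And>a r. a \<in> A \<Longrightarrow> r \<in> m \<Longrightarrow> r \<otimes> a \<in> B"
  shows "dcc_between R B (B <+> Idl A)"
  using assms(2-4)
proof (induction A rule: finite_induct)
  case empty
  have "B <+> Idl {} = B"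
    using set_add_subset_ideal[OF B genideal_ideal B _ genideal_minimal[OF B]]
      ideal_Un_subset_set_add[OF B genideal_ideal] by auto
  then show ?case
    using dcc_between_refl by simp
next
  case (insert a A)
  let ?B' = "B <+> Idl A"
  have a: "a \<in> carrier R" and A: "A \<subseteq> carrier R"
    using insert.prems(1) by auto
  have B': "ideal ?B' R"
    using add_ideals[OF B genideal_ideal[OF A]] .
  have carr: "B \<subseteq> carrier R" "Idl A \<subseteq> carrier R" "PIdl a \<subseteq> carrier R"
    using ideal.Icarr[OF B] ideal.Icarr[OF genideal_ideal[OF A]] ideal.Icarr[OF cgenideal_ideal[OF a]]
    by blast+
  have "B <+> Idl (insert a A) = B <+> (Idl A <+> PIdl a)"
    using genideal_insert[OF a A] set_add_comm[OF carr(3,2)] by simp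
  also have "\<dots> = ?B' <+> PIdl a"
    using add.set_mult_assoc[folded set_add_def, OF carr] by simp
  finally have "B <+> Idl (insert a A) = ?B' <+> PIdl a" .
  moreover have "dcc_between R ?B' (?B' <+> PIdl a)"
  proof (rule dcc_between_if_no_intermediate, rule ideal_between_cgenideal[OF B' a])
    fix r assume "r \<in> m"
    then show "r \<otimes> a \<in> ?B'"
      using insert.prems(2) ideal_Un_subset_set_add[OF B genideal_ideal[OF A]] by blast
  qed
  moreover have "dcc_between R B ?B'"
    using insert by simp
  ultimately show ?case
    using dcc_between_trans[OF B' add_ideals[OF B' cgenideal_ideal[OF a]]]
      ideal_Un_subset_set_add[OF B genideal_ideal[OF A]]
      ideal_Un_subset_set_add[OF B' cgenideal_ideal[OF a]] by auto
qed

lemma dcc_between_max_pow: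
  assumes "noetherian_ring R"
  shows "dcc_between R (ideal_pow R m (Suc n)) (ideal_pow R m n)"
proof -
  obtain A where A: "A \<subseteq> carrier R" "finite A" "ideal_pow R m n = Idl A"
    using noetherian_ring.finetely_gen[OF assms max_pow_ideal] by blast
  have "ideal_pow R m (Suc n) \<subseteq> ideal_pow R m n"
    by (rule ideal_pow_antimono[OF max_ideal]) simp
  then have "ideal_pow R m (Suc n) <+> ideal_pow R m n = ideal_pow R m n"
    using set_add_subset_ideal[OF max_pow_ideal max_pow_ideal max_pow_ideal, of "Suc n" n n]
      ideal_Un_subset_set_add[OF max_pow_ideal max_pow_ideal, of "Suc n" n] by blast
  moreover have "dcc_between R (ideal_pow R m (Suc n)) (ideal_pow R m (Suc n) <+> Idl A)"
  proof (rule dcc_between_genideal[OF max_pow_ideal A(2,1)])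
    fix a r assume "a \<in> A" "r \<in> m"
    then show "r \<otimes> a \<in> ideal_pow R m (Suc n)"
      using genideal_self[OF A(1)] A(3) by (auto intro: ideal_prod.prod)
  qed
  ultimately show ?thesis
    by (simp add: A(3)[symmetric])
qed

lemma artinian_if_max_nilpotent:
  assumes "noetherian_ring R" and "ideal_pow R m n = {\<zero>}"
  shows "artinian R"
proof -
  have "dcc_between R (ideal_pow R m k) (carrier R)" for k
  proof (induction k)
    case 0
    then show ?case
      using dcc_between_refl by simp
  next
    case (Suc k)
    have "ideal_pow R m (Suc k) \<subseteq> ideal_pow R m k" "ideal_pow R m k \<subseteq> carrier R"
      using ideal_pow_antimono[OF max_ideal, of k "Suc k"] ideal_pow_antimono[OF max_ideal, of 0 k]
      by simp_all
    then show ?case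
      using dcc_between_trans[OF max_pow_ideal oneideal _ _ dcc_between_max_pow[OF assms(1)] Suc.IH]
      by blast
  qed
  from this[of n] show ?thesis
    using assms(2) by (simp add: artinian_if_dcc_between)
qed

lemma loewy_length_less:
  assumes "artinian R" and "ideal_pow R m n = {\<zero>}"
  shows "loewy_length R m < enat n"
proof -
  let ?S = "{i. ideal_pow R m i \<noteq> {\<zero>}}"
  have "?S \<subseteq> {..<n}"
  proof
    fix i assume "i \<in> ?S"
    moreover have "ideal_pow R m i = {\<zero>}" if "n \<le> i"
      using ideal_pow_antimono[OF max_ideal that] assms(2) ideal_zero_closed[OF max_pow_ideal] by blast
    ultimately show "i \<in> {..<n}"
      by (meson lessThan_iff mem_Collect_eq not_le)
  qed
  moreover have "\<one> \<noteq> \<zero>"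
    using one_notin_max ideal_zero_closed[OF max_ideal] by force
  then have "0 \<in> ?S"
    using one_closed by force
  ultimately have "Max ?S < n"
    by (metis Max_in empty_iff finite_lessThan finite_subset lessThan_iff subsetD)
  then show ?thesis
    using assms(1) unfolding loewy_length_def by simp
qed

end

lemma (in noetherian_ring) genideal_pair_if_min_gens_le_two:
  assumes "ideal I R" and "min_gens R I \<le> 2"
  obtains a b where "a \<in> carrier R" "b \<in> carrier R" "I = Idl {a, b}"
proof -
  have "\<exists>n A. A \<subseteq> carrier R \<and> finite A \<and> card A = n \<and> I = Idl A"
    using finetely_gen[OF assms(1)] by blast
  then obtain A where A: "A \<subseteq> carrier R" "finite A" "card A \<le> 2" "I = Idl A"
    using LeastI_ex[of "\<lambda>n. \<exists>A. A \<subseteq> carrier R \<and> finite A \<and> card A = n \<and> I = Idl A"] assms(2)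
    unfolding min_gens_def by auto
  consider "A = {}" | a b where "A = {a, b}"
    using A(2,3)
    by (metis card_0_eq card_1_singletonE card_2_iff insert_absorb2 le_Suc_eq numeral_2_eq_2
        le_zero_eq One_nat_def)
  then show thesis
  proof cases
    case 1
    have "Idl {} = Idl {\<zero>, \<zero>}"
      using genideal_zero genideal_minimal[OF zeroideal, of "{}"] ideal_zero_closed[OF genideal_ideal[of "{}"]]
      by auto
    with that[of \<zero> \<zero>] A(4) 1 show thesis by simp
  next
    case 2
    with that[of a b] A(1,4) show thesis by simp
  qed
qed

theorem lemma3p1:
  fixes R :: "('a, 'b) ring_scheme" and m :: "'a set"
  assumes "cring R" and "noetherian_ring R"
    and "maximalideal m R" and "m \<noteq> {\<zero>\<^bsub>R\<^esub>}"
    and "\<forall>J. maximalideal J R \<longrightarrow> J = m"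
    and "min_gens R (ideal_pow R m 2) \<le> 2"
  shows "(\<exists>x \<in> m - ideal_pow R m 2. ideal_pow R m 2 = ideal_prod R (PIdl\<^bsub>R\<^esub> x) m)
       \<and> (loewy_length R m \<ge> 3 \<longrightarrow>
          (\<forall>x \<in> m - ideal_pow R m 2. ideal_pow R m 2 = ideal_prod R (PIdl\<^bsub>R\<^esub> x) m
              \<longrightarrow> x \<otimes>\<^bsub>R\<^esub> x \<notin> ideal_pow R m 3))"
proof -
  interpret local_ring R m
    using assms(3,5) by (intro local_ring.intro[OF assms(1)] local_ring_axioms.intro) blast+
  interpret noetherian_ring R
    by (rule assms(2))
  obtain a b where gens: "a \<in> carrier R" "b \<in> carrier R" "ideal_pow R m 2 = Idl\<^bsub>R\<^esub> {a, b}"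
    using genideal_pair_if_min_gens_le_two[OF max_pow_ideal assms(6)] .
  show ?thesis
  proof (intro conjI impI ballI)
    show "\<exists>x \<in> m - ideal_pow R m 2. ideal_pow R m 2 = ideal_prod R (PIdl\<^bsub>R\<^esub> x) m"
      by (rule ex_square_eq_cgenideal_prod[OF gens assms(4)])
  next
    fix x assume lo: "loewy_length R m \<ge> 3" and x: "x \<in> m - ideal_pow R m 2"
      and eq: "ideal_pow R m 2 = ideal_prod R (PIdl\<^bsub>R\<^esub> x) m"
    show "x \<otimes>\<^bsub>R\<^esub> x \<notin> ideal_pow R m 3"
    proof
      assume "x \<otimes>\<^bsub>R\<^esub> x \<in> ideal_pow R m 3"
      with x eq have "ideal_pow R m 3 = {\<zero>\<^bsub>R\<^esub>}"
        using cube_eq_zero_if_square_in_cube by blast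
      then have "loewy_length R m < enat 3"
        using loewy_length_less artinian_if_max_nilpotent[OF assms(2)] by blast
      with lo show False
        by (simp add: numeral_eq_enat)
    qed
  qed
qed

end
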